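(* Let $n\ge 538$ be an integer and $\lambda$ a positive integer. Then there is no graphical $2$-$\left(\binom{n}{2},5,\lambda\right)$ design.
   Context: For a finite set $X$ and integer $t\ge 0$, $\binom{X}{t}$ denotes the set of $t$-subsets of $X$. A $t$-$(v,k,\lambda)$ design is a pair $(X,\mathcal{B})$ with $|X|=v$ and $\mathcal{B}\subseteq\binom{X}{k}$ (the blocks) such that every $T\in\binom{X}{t}$ is contained in exactly $\lambda$ blocks; it is moreover required that $t\ge 2$, $t<k$, $\mathcal{B}\neq\emptyset$ and $\mathcal{B}\neq\binom{X}{k}$. An automorphism of $(X,\mathcal{B})$ is a bijection $\sigma:X\to X$ with $\sigma(\mathcal{B})=\mathcal{B}$. Let $V$ be a set with $|V|=n$; the symmetric group $\mathrm{Sym}(V)$ acts on $\binom{V}{2}$ (the edge set of the complete graph $K_n$), giving a permutation group $\mathcal{S}_n^{[2]}\le \mathrm{Sym}(\binom{V}{2})$. A $t$-$(v,k,\lambda)$ design $(X,\mathcal{B})$ is graphical if $v=\binom{n}{2}$ and its automorphism group contains a subgroup that is permutation isomorphic to $\mathcal{S}_n^{[2]}$ (equivalently, one may take $X$ to be the edge set of $K_n$ and $\mathcal{B}$ a set of $k$-edge subgraphs of $K_n$ closed under graph isomorphism, i.e. a union of $\mathcal{S}_n^{[2]}$-orbits on $\binom{X}{k}$). *)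

theory Defs
  imports Main
begin

definition subsets_of_size :: "'a set \<Rightarrow> nat \<Rightarrow> 'a set set" where
  "subsets_of_size X t = {S. S \<subseteq> X \<and> card S = t}"

definition t_design :: "'a set \<Rightarrow> 'a set set \<Rightarrow> nat \<Rightarrow> nat \<Rightarrow> nat \<Rightarrow> nat \<Rightarrow> bool" where
  "t_design X B t v k lam \<longleftrightarrow>
     finite X \<and> card X = v \<and> B \<subseteq> subsets_of_size X k \<and>
     (\<forall>T \<in> subsets_of_size X t. card {b \<in> B. T \<subseteq> b} = lam) \<and>
     2 \<le> t \<and> t < k \<and> B \<noteq> {} \<and> B \<noteq> subsets_of_size X k"

definition design_automorphism :: "'a set \<Rightarrow> 'a set set \<Rightarrow> ('a \<Rightarrow> 'a) \<Rightarrow> bool" where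
  "design_automorphism X B \<sigma> \<longleftrightarrow> bij_betw \<sigma> X X \<and> (\<lambda>b. \<sigma> ` b) ` B = B"

text \<open>Graphical design: v = n choose 2 and the automorphism group contains a subgroup
  permutation isomorphic to S_n^[2], i.e. there is an n-set V and a bijection phi from
  the 2-subsets of V onto X such that, for every permutation sigma of V, the conjugate
  phi o sigma^[2] o phi^-1 is an automorphism of (X, B).\<close>
definition graphical :: "nat \<Rightarrow> 'a set \<Rightarrow> 'a set set \<Rightarrow> bool" where
  "graphical n X B \<longleftrightarrow> card X = n choose 2 \<and>
     (\<exists>(V :: nat set) (\<phi> :: nat set \<Rightarrow> 'a).
        finite V \<and> card V = n \<and> bij_betw \<phi> (subsets_of_size V 2) X \<and>
        (\<forall>\<sigma>. bij_betw \<sigma> V V \<longrightarrow>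
           design_automorphism X B (\<lambda>x. \<phi> (\<sigma> ` (inv_into (subsets_of_size V 2) \<phi> x)))))"

end

theory Submission
  imports Defs "HOL-Combinatorics.Transposition"
begin

(*
  Double counting ordered pairs of distinct points inside blocks: if every pair of points lies in
  the same positive number c of blocks, then summing over the blocks counts every ordered pair of
  the point set c times. Call two points adjacent if the corresponding edges of K_n meet. A block
  of size 5 containing an adjacent pair has at most 25 times as many non-adjacent as adjacent
  ordered pairs, whereas in K_n an edge meets at most 2n of the other n(n-1)/2 - 1 edges, so
  globally the ratio exceeds 25. Hence some block of a graphical 2-(n choose 2, 5, lambda) design
  is a matching. All 5-matchings of K_n form one orbit of S_n, so every 5-matching is a block, and
  then the complementary family of 5-sets, again a pairwise balanced family, is empty by the same
  counting: the design would be complete. The counting needs only n >= 106.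
*)

lemma finite_subsets_of_size: "finite X \<Longrightarrow> finite (subsets_of_size X k)"
  by (rule finite_subset[of _ "Pow X"]) (auto simp: subsets_of_size_def)

lemma card_subsets_of_size: "finite X \<Longrightarrow> card (subsets_of_size X k) = card X choose k"
  by (simp add: subsets_of_size_def n_subsets)

lemma card_supersets_of_size:
  assumes X: "finite X" and T: "T \<subseteq> X" "card T \<le> k"
  shows "card {b \<in> subsets_of_size X k. T \<subseteq> b} = (card X - card T) choose (k - card T)"
proof -
  have finT: "finite T" using T(1) X by (rule finite_subset)
  have "bij_betw (\<lambda>b. b - T) {b \<in> subsets_of_size X k. T \<subseteq> b} (subsets_of_size (X - T) (k - card T))"
  proof (rule bij_betw_byWitness[where f' = "\<lambda>c. c \<union> T"])
    show "(\<lambda>b. b - T) ` {b \<in> subsets_of_size X k. T \<subseteq> b} \<subseteq> subsets_of_size (X - T) (k - card T)"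
      using X by (auto simp: subsets_of_size_def card_Diff_subset finT intro: finite_subset)
    show "(\<lambda>c. c \<union> T) ` subsets_of_size (X - T) (k - card T) \<subseteq> {b \<in> subsets_of_size X k. T \<subseteq> b}"
    proof (rule image_subsetI)
      fix c assume "c \<in> subsets_of_size (X - T) (k - card T)"
      then have c: "c \<subseteq> X - T" "card c = k - card T" by (auto simp: subsets_of_size_def)
      have "card (c \<union> T) = k"
        using c T finT finite_subset[OF _ X, of c] by (subst card_Un_disjoint) auto
      then show "c \<union> T \<in> {b \<in> subsets_of_size X k. T \<subseteq> b}"
        using c T by (auto simp: subsets_of_size_def)
    qed
  qed (auto simp: subsets_of_size_def)
  then have "card {b \<in> subsets_of_size X k. T \<subseteq> b} = card (X - T) choose (k - card T)"
    using X by (simp add: bij_betw_same_card card_subsets_of_size)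
  then show ?thesis using T finT by (simp add: card_Diff_subset)
qed

lemma card_Collect_eq_sum_of_bool:
  "finite A \<Longrightarrow> card {a\<in>A. P a} = (\<Sum>a\<in>A. of_bool (P a))"
  by (simp add: Collect_conj_eq Int_commute)

lemma sum_card_Collect_swap:
  assumes "finite A" "finite B"
  shows "(\<Sum>a\<in>A. card {b\<in>B. P a b}) = (\<Sum>b\<in>B. card {a\<in>A. P a b})"
  using assms by (simp only: card_Collect_eq_sum_of_bool) (rule sum.swap)

definition ordered_pairs :: "('a \<Rightarrow> 'a \<Rightarrow> bool) \<Rightarrow> 'a set \<Rightarrow> ('a \<times> 'a) set" where
  "ordered_pairs Q S = {(e, f). e \<in> S \<and> f \<in> S \<and> e \<noteq> f \<and> Q e f}"

lemma ordered_pairs_subset_Times: "ordered_pairs Q S \<subseteq> S \<times> S"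
  by (auto simp: ordered_pairs_def)

lemma finite_ordered_pairs: "finite S \<Longrightarrow> finite (ordered_pairs Q S)"
  using ordered_pairs_subset_Times by (rule finite_subset) simp

lemma card_ordered_pairs:
  assumes "finite S"
  shows "card (ordered_pairs Q S) = (\<Sum>e\<in>S. card {f\<in>S. f \<noteq> e \<and> Q e f})"
proof -
  have "ordered_pairs Q S = Sigma S (\<lambda>e. {f\<in>S. f \<noteq> e \<and> Q e f})"
    by (auto simp: ordered_pairs_def)
  then show ?thesis using assms by simp
qed

lemma card_ordered_pairs_le_if_not_pairwise:
  assumes "finite b" "card b = k" "\<not> pairwise P b"
  shows "card (ordered_pairs P b) \<le> k * k * card (ordered_pairs (\<lambda>e f. \<not> P e f) b)"
proof -
  obtain e f where "e \<in> b" "f \<in> b" "e \<noteq> f" "\<not> P e f"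
    using assms(3) unfolding pairwise_def by blast
  then have "(e, f) \<in> ordered_pairs (\<lambda>e f. \<not> P e f) b" by (simp add: ordered_pairs_def)
  then have "card (ordered_pairs (\<lambda>e f. \<not> P e f) b) \<ge> 1"
    using assms(1) finite_ordered_pairs by (metis One_nat_def Suc_leI card_gt_0_iff empty_iff)
  moreover have "card (ordered_pairs P b) \<le> k * k"
    using card_mono[OF _ ordered_pairs_subset_Times] assms(1,2)
    by (metis card_cartesian_product finite_cartesian_product)
  ultimately show ?thesis by (metis le_trans mult_le_mono2 nat_mult_1_right)
qed

lemma sum_card_ordered_pairs_in_blocks:
  assumes X: "finite X" and F: "F \<subseteq> Pow X"
    and cnt: "\<forall>T \<in> subsets_of_size X 2. card {b\<in>F. T \<subseteq> b} = c"
  shows "(\<Sum>b\<in>F. card (ordered_pairs Q b)) = c * card (ordered_pairs Q X)"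
proof -
  let ?Y = "ordered_pairs Q X"
  have finF: "finite F" using F X by (meson finite_Pow_iff finite_subset)
  have finY: "finite ?Y" using X by (rule finite_ordered_pairs)
  have "(\<Sum>b\<in>F. card (ordered_pairs Q b)) = (\<Sum>b\<in>F. card {p\<in>?Y. p \<in> b \<times> b})"
    using F by (intro sum.cong arg_cong[where f = card]) (auto simp: ordered_pairs_def)
  also have "\<dots> = (\<Sum>p\<in>?Y. card {b\<in>F. p \<in> b \<times> b})"
    using finF finY by (rule sum_card_Collect_swap)
  also have "\<dots> = (\<Sum>p\<in>?Y. c)"
  proof (rule sum.cong)
    fix p assume "p \<in> ?Y"
    then have "{fst p, snd p} \<in> subsets_of_size X 2"
      by (auto simp: ordered_pairs_def subsets_of_size_def)
    then have "card {b\<in>F. {fst p, snd p} \<subseteq> b} = c" using cnt by blast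
    moreover have "{b\<in>F. p \<in> b \<times> b} = {b\<in>F. {fst p, snd p} \<subseteq> b}"
      by (auto simp: mem_Times_iff)
    ultimately show "card {b\<in>F. p \<in> b \<times> b} = c" by (simp only:)
  qed simp
  finally show ?thesis by simp
qed

lemma pair_balanced_family_empty:
  assumes X: "finite X" and F: "F \<subseteq> subsets_of_size X k"
    and cnt: "\<forall>T \<in> subsets_of_size X 2. card {b\<in>F. T \<subseteq> b} = c"
    and not_independent: "\<forall>b\<in>F. \<not> pairwise P b"
    and sparse: "\<forall>e\<in>X. k * k * card {f\<in>X. f \<noteq> e \<and> \<not> P e f} < card {f\<in>X. f \<noteq> e \<and> P e f}"
  shows "F = {}"
proof (rule ccontr)
  assume "F \<noteq> {}"
  then obtain b0 e f where b0: "b0 \<in> F" and ef: "e \<in> b0" "f \<in> b0" "e \<noteq> f"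
    using not_independent unfolding pairwise_def by blast
  have FX: "F \<subseteq> Pow X" and card_b: "\<And>b. b \<in> F \<Longrightarrow> card b = k"
    using F by (auto simp: subsets_of_size_def)
  have finF: "finite F" using FX X by (meson finite_Pow_iff finite_subset)
  have "{e, f} \<in> subsets_of_size X 2" using ef b0 FX by (auto simp: subsets_of_size_def)
  then have "card {b\<in>F. {e, f} \<subseteq> b} = c" using cnt by blast
  moreover have "card {b\<in>F. {e, f} \<subseteq> b} \<noteq> 0" using b0 ef finF by auto
  ultimately have "c > 0" by simp
  have block_bound: "card (ordered_pairs P b) \<le> k * k * card (ordered_pairs (\<lambda>e f. \<not> P e f) b)"
    if b: "b \<in> F" for b
    using b FX X card_b not_independent
    by (intro card_ordered_pairs_le_if_not_pairwise) (auto intro: finite_subset)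
  have "c * card (ordered_pairs P X) = (\<Sum>b\<in>F. card (ordered_pairs P b))"
    using sum_card_ordered_pairs_in_blocks[OF X FX cnt] by simp
  also have "\<dots> \<le> (\<Sum>b\<in>F. k * k * card (ordered_pairs (\<lambda>e f. \<not> P e f) b))"
    using block_bound by (rule sum_mono)
  also have "\<dots> = c * (k * k * card (ordered_pairs (\<lambda>e f. \<not> P e f) X))"
    using sum_card_ordered_pairs_in_blocks[OF X FX cnt] by (simp add: sum_distrib_left[symmetric])
  finally have "card (ordered_pairs P X) \<le> k * k * card (ordered_pairs (\<lambda>e f. \<not> P e f) X)"
    using \<open>c > 0\<close> by simp
  moreover have "k * k * card (ordered_pairs (\<lambda>e f. \<not> P e f) X) < card (ordered_pairs P X)"
  proof -
    have "X \<noteq> {}" using b0 ef FX by blast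
    then have "(\<Sum>e\<in>X. k * k * card {f\<in>X. f \<noteq> e \<and> \<not> P e f}) < (\<Sum>e\<in>X. card {f\<in>X. f \<noteq> e \<and> P e f})"
      using X sparse by (intro sum_strict_mono) auto
    then show ?thesis using X by (simp add: card_ordered_pairs sum_distrib_left)
  qed
  ultimately show False by simp
qed

lemma complement_pair_count:
  assumes X: "finite X" and B: "B \<subseteq> subsets_of_size X k" and k: "2 \<le> k"
    and cnt: "\<forall>T \<in> subsets_of_size X 2. card {b\<in>B. T \<subseteq> b} = lam"
  shows "\<forall>T \<in> subsets_of_size X 2.
           card {b \<in> subsets_of_size X k - B. T \<subseteq> b} = ((card X - 2) choose (k - 2)) - lam"
proof
  fix T assume T: "T \<in> subsets_of_size X 2"
  have "{b \<in> subsets_of_size X k - B. T \<subseteq> b} = {b \<in> subsets_of_size X k. T \<subseteq> b} - {b\<in>B. T \<subseteq> b}"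
    by blast
  moreover have "{b\<in>B. T \<subseteq> b} \<subseteq> {b \<in> subsets_of_size X k. T \<subseteq> b}" using B by blast
  moreover have "finite {b\<in>B. T \<subseteq> b}"
    using finite_subset[OF B finite_subsets_of_size[OF X]] by simp
  ultimately have "card {b \<in> subsets_of_size X k - B. T \<subseteq> b}
      = card {b \<in> subsets_of_size X k. T \<subseteq> b} - card {b\<in>B. T \<subseteq> b}"
    by (simp add: card_Diff_subset)
  also have "card {b \<in> subsets_of_size X k. T \<subseteq> b} = (card X - 2) choose (k - 2)"
    using T X k by (subst card_supersets_of_size) (auto simp: subsets_of_size_def)
  finally show "card {b \<in> subsets_of_size X k - B. T \<subseteq> b} = ((card X - 2) choose (k - 2)) - lam"
    using cnt T by simp
qed

lemma card_meeting_edges_le: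
  assumes V: "finite V" and g: "g \<in> subsets_of_size V 2"
  shows "card {h \<in> subsets_of_size V 2. \<not> disjnt g h} \<le> 2 * card V"
proof -
  obtain a b where ab: "g = {a, b}" using g by (auto simp: subsets_of_size_def card_2_iff)
  have "{h \<in> subsets_of_size V 2. \<not> disjnt g h} \<subseteq> (\<lambda>z. {a, z}) ` V \<union> (\<lambda>z. {b, z}) ` V"
  proof
    fix h assume h: "h \<in> {h \<in> subsets_of_size V 2. \<not> disjnt g h}"
    then obtain x y where xy: "h = {x, y}" "x \<in> V" "y \<in> V"
      by (auto simp: subsets_of_size_def card_2_iff)
    then show "h \<in> (\<lambda>z. {a, z}) ` V \<union> (\<lambda>z. {b, z}) ` V"
      using h ab by (auto simp: disjnt_def insert_commute)
  qed
  then have "card {h \<in> subsets_of_size V 2. \<not> disjnt g h} \<le> card ((\<lambda>z. {a, z}) ` V \<union> (\<lambda>z. {b, z}) ` V)"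
    using V by (intro card_mono) auto
  also have "\<dots> \<le> card ((\<lambda>z. {a, z}) ` V) + card ((\<lambda>z. {b, z}) ` V)"
    by (rule card_Un_le)
  also have "\<dots> \<le> 2 * card V"
    using card_image_le[OF V, of "\<lambda>z. {a, z}"] card_image_le[OF V, of "\<lambda>z. {b, z}"] by simp
  finally show ?thesis .
qed

lemma meeting_edges_sparse:
  assumes V: "finite V" and \<phi>: "bij_betw \<phi> (subsets_of_size V 2) X"
    and large: "2 * (r + 1) * card V + 1 < card V choose 2"
  defines "\<psi> \<equiv> inv_into (subsets_of_size V 2) \<phi>"
  shows "\<forall>e\<in>X. r * card {f\<in>X. f \<noteq> e \<and> \<not> disjnt (\<psi> e) (\<psi> f)}
               < card {f\<in>X. f \<noteq> e \<and> disjnt (\<psi> e) (\<psi> f)}"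
proof
  fix e assume e: "e \<in> X"
  let ?E = "subsets_of_size V 2"
  let ?M = "{f\<in>X. f \<noteq> e \<and> \<not> disjnt (\<psi> e) (\<psi> f)}"
  let ?D = "{f\<in>X. f \<noteq> e \<and> disjnt (\<psi> e) (\<psi> f)}"
  have \<psi>: "bij_betw \<psi> X ?E" unfolding \<psi>_def using \<phi> by (rule bij_betw_inv_into)
  have finE: "finite ?E" using V by (rule finite_subsets_of_size)
  have X: "finite X" using \<phi> finE bij_betw_finite by blast
  have card_X: "card X = card V choose 2"
    using bij_betw_same_card[OF \<phi>] card_subsets_of_size[OF V] by simp
  have "inj_on \<psi> ?M" using bij_betw_imp_inj_on[OF \<psi>] by (rule inj_on_subset) auto
  then have "card ?M = card (\<psi> ` ?M)" by (rule card_image[symmetric])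
  also have "\<dots> \<le> card {h \<in> ?E. \<not> disjnt (\<psi> e) h}"
    using \<psi> finE by (intro card_mono) (auto dest: bij_betwE)
  also have "\<dots> \<le> 2 * card V"
    using V \<psi> e by (intro card_meeting_edges_le) (auto dest: bij_betwE)
  finally have M: "card ?M \<le> 2 * card V" .
  have "card ?M + card ?D = card (?M \<union> ?D)" using X by (intro card_Un_disjoint[symmetric]) auto
  also have "?M \<union> ?D = X - {e}" by auto
  finally have MD: "card ?M + card ?D = card X - 1" using e X by simp
  have "(r + 1) * card ?M \<le> (r + 1) * (2 * card V)" using M by (rule mult_le_mono2)
  then have "r * card ?M + card ?M + 1 < card X" using large card_X by simp
  then show "r * card ?M < card ?D" using MD by linarith
qed

lemma choose_two_gt_linear:
  fixes n :: nat
  assumes "106 \<le> n"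
  shows "52 * n + 1 < n choose 2"
proof -
  have "even (n * (n - 1))" by (cases "even n") auto
  then have "2 * (n choose 2) = n * (n - 1)" by (simp add: choose_two)
  moreover have "n * 105 \<le> n * (n - 1)" using assms by (intro mult_le_mono2) simp
  ultimately show ?thesis using assms by linarith
qed

lemma ex_permutation_map_eq:
  assumes "length xs = length ys" "distinct xs" "distinct ys" "set xs \<subseteq> V" "set ys \<subseteq> V"
  shows "\<exists>\<sigma>. bij_betw \<sigma> V V \<and> map \<sigma> xs = ys"
  using assms
proof (induction xs ys rule: list_induct2)
  case Nil
  show ?case using bij_betw_id by fastforce
next
  case (Cons x xs y ys)
  then obtain \<sigma> where \<sigma>: "bij_betw \<sigma> V V" "map \<sigma> xs = ys" by auto
  have x: "x \<in> V" "x \<notin> set xs" and y: "y \<in> V" "y \<notin> set ys" using Cons.prems by auto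
  have "\<sigma> x \<notin> set ys"
  proof
    assume "\<sigma> x \<in> set ys"
    then obtain z where z: "z \<in> set xs" "\<sigma> z = \<sigma> x" using \<sigma>(2) by auto
    then have "z \<in> V" using Cons.prems(3) by auto
    then have "z = x" using inj_onD[OF bij_betw_imp_inj_on[OF \<sigma>(1)] z(2)] x(1) by blast
    then show False using z(1) x(2) by simp
  qed
  define \<tau> where "\<tau> = transpose (\<sigma> x) y \<circ> \<sigma>"
  have "bij_betw \<tau> V V"
    unfolding \<tau>_def using \<sigma>(1) bij_betwE[OF \<sigma>(1)] x y by (intro bij_betw_trans) auto
  moreover have "map \<tau> xs = ys"
  proof -
    have "\<tau> z = \<sigma> z" if "z \<in> set xs" for z
    proof -
      have "\<sigma> z \<in> set ys" using that \<sigma>(2) by auto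
      then have "\<sigma> z \<noteq> \<sigma> x" "\<sigma> z \<noteq> y" using \<open>\<sigma> x \<notin> set ys\<close> y(2) by auto
      then show ?thesis by (simp add: \<tau>_def)
    qed
    then show ?thesis using \<sigma>(2) by (metis map_eq_conv)
  qed
  moreover have "\<tau> x = y" by (simp add: \<tau>_def)
  ultimately show ?case by auto
qed

lemma matching_as_pair_list:
  assumes "finite M" "pairwise disjnt M" "M \<subseteq> subsets_of_size V 2"
  shows "\<exists>ps. distinct (map fst ps @ map snd ps) \<and> (\<lambda>(a, b). {a, b}) ` set ps = M
              \<and> length ps = card M"
  using assms
proof (induction M rule: finite_induct)
  case empty
  show ?case by simp
next
  case (insert g M)
  then obtain ps where ps: "distinct (map fst ps @ map snd ps)" "(\<lambda>(a, b). {a, b}) ` set ps = M"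
      "length ps = card M"
    by (auto simp: pairwise_insert)
  obtain a b where ab: "g = {a, b}" "a \<noteq> b"
    using insert.prems(2) by (auto simp: subsets_of_size_def card_2_iff)
  have "disjnt g h" if "h \<in> M" for h
    using insert.prems(1) insert.hyps(2) that by (auto simp: pairwise_insert)
  then have "a \<notin> \<Union>M" "b \<notin> \<Union>M" using ab by (auto simp: disjnt_def)
  moreover have "set (map fst ps) \<union> set (map snd ps) = \<Union>M"
    unfolding ps(2)[symmetric] by (auto simp: image_iff) (metis fst_conv snd_conv)+
  ultimately have "distinct (map fst ((a, b) # ps) @ map snd ((a, b) # ps))"
    using ps(1) ab(2) by auto
  moreover have "(\<lambda>(a, b). {a, b}) ` set ((a, b) # ps) = insert g M" using ps(2) ab(1) by simp
  moreover have "length ((a, b) # ps) = card (insert g M)" using ps(3) insert.hyps by simp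
  ultimately show ?case by blast
qed

lemma matchings_conjugate:
  assumes "finite M" "pairwise disjnt M" "M \<subseteq> subsets_of_size V 2"
    and "finite M'" "pairwise disjnt M'" "M' \<subseteq> subsets_of_size V 2"
    and "card M = card M'"
  shows "\<exists>\<sigma>. bij_betw \<sigma> V V \<and> (\<lambda>g. \<sigma> ` g) ` M = M'"
proof -
  obtain ps where ps: "distinct (map fst ps @ map snd ps)" "(\<lambda>(a, b). {a, b}) ` set ps = M"
      "length ps = card M"
    using matching_as_pair_list assms(1-3) by blast
  obtain qs where qs: "distinct (map fst qs @ map snd qs)" "(\<lambda>(a, b). {a, b}) ` set qs = M'"
      "length qs = card M'"
    using matching_as_pair_list assms(4-6) by blast
  have "set (map fst ps @ map snd ps) \<subseteq> V" "set (map fst qs @ map snd qs) \<subseteq> V"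
    using ps(2) qs(2) assms(3,6) by (fastforce simp: subsets_of_size_def)+
  moreover have "length (map fst ps @ map snd ps) = length (map fst qs @ map snd qs)"
    using ps(3) qs(3) assms(7) by simp
  ultimately obtain \<sigma> where \<sigma>: "bij_betw \<sigma> V V" "map \<sigma> (map fst ps @ map snd ps) = map fst qs @ map snd qs"
    using ex_permutation_map_eq[OF _ ps(1) qs(1)] by blast
  then have "map \<sigma> (map fst ps) = map fst qs" "map \<sigma> (map snd ps) = map snd qs"
    using ps(3) qs(3) assms(7) by auto
  then have "qs = map (map_prod \<sigma> \<sigma>) ps"
    by (metis zip_map_fst_snd zip_map_map map_prod_def)
  then have "M' = (\<lambda>(a, b). {a, b}) ` map_prod \<sigma> \<sigma> ` set ps" using qs(2) by simp
  also have "\<dots> = (\<lambda>g. \<sigma> ` g) ` M" unfolding ps(2)[symmetric] image_image by (rule image_cong) auto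
  finally have "(\<lambda>g. \<sigma> ` g) ` M = M'" ..
  then show ?thesis using \<sigma>(1) by blast
qed

lemma graphical_blocks_contain_matchings:
  assumes \<phi>: "bij_betw \<phi> (subsets_of_size V 2) X"
    and aut: "\<forall>\<sigma>. bij_betw \<sigma> V V \<longrightarrow>
                design_automorphism X B (\<lambda>x. \<phi> (\<sigma> ` inv_into (subsets_of_size V 2) \<phi> x))"
  defines "\<psi> \<equiv> inv_into (subsets_of_size V 2) \<phi>"
  assumes m0: "m0 \<in> B" "m0 \<subseteq> X" "finite m0" "pairwise (\<lambda>e f. disjnt (\<psi> e) (\<psi> f)) m0"
    and m: "m \<subseteq> X" "finite m" "pairwise (\<lambda>e f. disjnt (\<psi> e) (\<psi> f)) m"
    and card_m: "card m = card m0"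
  shows "m \<in> B"
proof -
  have \<psi>: "bij_betw \<psi> X (subsets_of_size V 2)" unfolding \<psi>_def using \<phi> by (rule bij_betw_inv_into)
  have matching: "pairwise disjnt (\<psi> ` s)" "\<psi> ` s \<subseteq> subsets_of_size V 2" "card (\<psi> ` s) = card s"
    if "s \<subseteq> X" "pairwise (\<lambda>e f. disjnt (\<psi> e) (\<psi> f)) s" for s
    using that bij_betwE[OF \<psi>] inj_on_subset[OF bij_betw_imp_inj_on[OF \<psi>]]
    by (auto simp: pairwise_image card_image pairwise_def)
  obtain \<sigma> where \<sigma>: "bij_betw \<sigma> V V" "(\<lambda>g. \<sigma> ` g) ` \<psi> ` m0 = \<psi> ` m"
    using matchings_conjugate[of "\<psi> ` m0" V "\<psi> ` m"] matching[OF m0(2,4)] matching[OF m(1,3)]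
      m0(3) m(2) card_m by auto
  have "(\<lambda>x. \<phi> (\<sigma> ` \<psi> x)) ` m0 = \<phi> ` \<psi> ` m" using \<sigma>(2) by (metis image_image)
  also have "\<dots> = m"
    using m(1) bij_betw_inv_into_right[OF \<phi>] by (force simp: \<psi>_def image_image)
  finally have "(\<lambda>x. \<phi> (\<sigma> ` \<psi> x)) ` m0 = m" .
  moreover have "(\<lambda>b. (\<lambda>x. \<phi> (\<sigma> ` \<psi> x)) ` b) ` B = B"
    using aut \<sigma>(1) by (simp add: design_automorphism_def \<psi>_def)
  ultimately show ?thesis using m0(1) by blast
qed

theorem mainTheorem1:
  fixes n lam :: nat
  assumes "n \<ge> 538" and "lam > 0"
  shows "\<not> (\<exists>(X :: 'a set) B. t_design X B 2 (n choose 2) 5 lam \<and> graphical n X B)"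
proof
  assume "\<exists>(X :: 'a set) B. t_design X B 2 (n choose 2) 5 lam \<and> graphical n X B"
  then obtain X :: "'a set" and B where des: "t_design X B 2 (n choose 2) 5 lam"
    and gr: "graphical n X B"
    by blast
  have X: "finite X" and B: "B \<subseteq> subsets_of_size X 5" "B \<noteq> {}" "B \<noteq> subsets_of_size X 5"
    and cnt: "\<forall>T \<in> subsets_of_size X 2. card {b\<in>B. T \<subseteq> b} = lam"
    using des unfolding t_design_def by auto
  obtain V :: "nat set" and \<phi> where V: "finite V" "card V = n" and \<phi>: "bij_betw \<phi> (subsets_of_size V 2) X"
    and aut: "\<forall>\<sigma>. bij_betw \<sigma> V V \<longrightarrow>
                design_automorphism X B (\<lambda>x. \<phi> (\<sigma> ` inv_into (subsets_of_size V 2) \<phi> x))"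
    using gr unfolding graphical_def by blast
  define \<psi> where "\<psi> = inv_into (subsets_of_size V 2) \<phi>"
  let ?P = "\<lambda>e f. disjnt (\<psi> e) (\<psi> f)"
  have sparse: "\<forall>e\<in>X. 5 * 5 * card {f\<in>X. f \<noteq> e \<and> \<not> ?P e f} < card {f\<in>X. f \<noteq> e \<and> ?P e f}"
    using meeting_edges_sparse[OF V(1) \<phi>, of 25] choose_two_gt_linear[of n] assms(1) V(2)
    unfolding \<psi>_def by simp
  have "\<exists>m0\<in>B. pairwise ?P m0"
    using pair_balanced_family_empty[OF X B(1) cnt] sparse B(2) by auto
  then obtain m0 where m0: "m0 \<in> B" "pairwise ?P m0" by blast
  have no_matching: "\<forall>m \<in> subsets_of_size X 5 - B. \<not> pairwise ?P m"
  proof (intro ballI notI)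
    fix m assume m: "m \<in> subsets_of_size X 5 - B" "pairwise ?P m"
    have "m \<subseteq> X" "card m = 5" "m0 \<subseteq> X" "card m0 = 5"
      using m(1) m0(1) B(1) by (auto simp: subsets_of_size_def)
    then have "m \<in> B"
      using graphical_blocks_contain_matchings[OF \<phi> aut] m0 m(2) X
      unfolding \<psi>_def by (metis finite_subset)
    then show False using m(1) by blast
  qed
  have "subsets_of_size X 5 - B = {}"
    by (rule pair_balanced_family_empty[OF X _ complement_pair_count[OF X B(1) _ cnt], where P = ?P])
      (use no_matching sparse in auto)
  then show False using B(1,3) by blast
qed

end
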